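(* Let $l\geq 2$ be an integer and let $n=\binom{2l+1}{l}+1$. Then $\chi'_{D_2}(\overleftrightarrow{K_n})<\chi'_{D_{1,2}}(\overleftrightarrow{K_n})$.
   Context: For a simple graph $G$, the symmetric digraph $\overleftrightarrow{G}$ is obtained by replacing each edge $uv$ of $G$ by the pair of opposite arcs $\overrightarrow{uv}$ and $\overrightarrow{vu}$; $K_n$ is the complete graph on $n$ vertices. A monochromatic 2-path is a pair of arcs $\overrightarrow{uv},\overrightarrow{vw}$ with $w\neq u$ of the same colour; a monochromatic 2-cycle is a pair $\overrightarrow{uv},\overrightarrow{vu}$ of the same colour. An arc-colouring is distinguishing if the only automorphism of $\overleftrightarrow{G}$ preserving the colour of every arc is the identity. $\chi'_{D_{1,2}}(\overleftrightarrow{G})$ is the least number of colours in a distinguishing arc-colouring with no monochromatic 2-cycles and no monochromatic 2-paths; $\chi'_{D_2}(\overleftrightarrow{G})$ is the least number of colours in a distinguishing arc-colouring with no monochromatic 2-paths. *)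

theory Defs
  imports Main
begin

text \<open>A simple graph is given by a vertex set V and a symmetric irreflexive
adjacency relation E. The symmetric digraph has arcs (u,v) for every edge uv.\<close>

definition sym_arcs :: "'a set \<Rightarrow> ('a \<Rightarrow> 'a \<Rightarrow> bool) \<Rightarrow> ('a \<times> 'a) set" where
  "sym_arcs V E = {(u, v). u \<in> V \<and> v \<in> V \<and> E u v}"

definition digraph_aut :: "'a set \<Rightarrow> ('a \<Rightarrow> 'a \<Rightarrow> bool) \<Rightarrow> ('a \<Rightarrow> 'a) \<Rightarrow> bool" where
  "digraph_aut V E \<sigma> \<longleftrightarrow> bij_betw \<sigma> V V \<and>
     (\<forall>u\<in>V. \<forall>v\<in>V. (u, v) \<in> sym_arcs V E \<longleftrightarrow> (\<sigma> u, \<sigma> v) \<in> sym_arcs V E)"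

definition arc_colouring :: "'a set \<Rightarrow> ('a \<Rightarrow> 'a \<Rightarrow> bool) \<Rightarrow> nat \<Rightarrow> ('a \<times> 'a \<Rightarrow> nat) \<Rightarrow> bool" where
  "arc_colouring V E k c \<longleftrightarrow> (\<forall>a\<in>sym_arcs V E. c a < k)"

definition distinguishing :: "'a set \<Rightarrow> ('a \<Rightarrow> 'a \<Rightarrow> bool) \<Rightarrow> ('a \<times> 'a \<Rightarrow> nat) \<Rightarrow> bool" where
  "distinguishing V E c \<longleftrightarrow>
     (\<forall>\<sigma>. digraph_aut V E \<sigma> \<and> (\<forall>(u, v)\<in>sym_arcs V E. c (\<sigma> u, \<sigma> v) = c (u, v))
        \<longrightarrow> (\<forall>v\<in>V. \<sigma> v = v))"

definition no_mono_2path :: "'a set \<Rightarrow> ('a \<Rightarrow> 'a \<Rightarrow> bool) \<Rightarrow> ('a \<times> 'a \<Rightarrow> nat) \<Rightarrow> bool" where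
  "no_mono_2path V E c \<longleftrightarrow>
     (\<forall>u v w. (u, v) \<in> sym_arcs V E \<and> (v, w) \<in> sym_arcs V E \<and> w \<noteq> u \<longrightarrow> c (u, v) \<noteq> c (v, w))"

definition no_mono_2cycle :: "'a set \<Rightarrow> ('a \<Rightarrow> 'a \<Rightarrow> bool) \<Rightarrow> ('a \<times> 'a \<Rightarrow> nat) \<Rightarrow> bool" where
  "no_mono_2cycle V E c \<longleftrightarrow> (\<forall>(u, v)\<in>sym_arcs V E. c (u, v) \<noteq> c (v, u))"

definition chi_D2 :: "'a set \<Rightarrow> ('a \<Rightarrow> 'a \<Rightarrow> bool) \<Rightarrow> nat" where
  "chi_D2 V E = (LEAST k. \<exists>c. arc_colouring V E k c \<and> distinguishing V E c \<and> no_mono_2path V E c)"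

definition chi_D12 :: "'a set \<Rightarrow> ('a \<Rightarrow> 'a \<Rightarrow> bool) \<Rightarrow> nat" where
  "chi_D12 V E = (LEAST k. \<exists>c. arc_colouring V E k c \<and> distinguishing V E c
       \<and> no_mono_2path V E c \<and> no_mono_2cycle V E c)"

definition K_V :: "nat \<Rightarrow> nat set" where "K_V n = {..<n}"
definition K_E :: "nat \<Rightarrow> nat \<Rightarrow> bool" where "K_E u v \<longleftrightarrow> u \<noteq> v"

end

theory Submission
  imports Defs "HOL.Binomial_Plus" "HOL-Library.Nat_Bijection"
begin

text \<open>
  Lower bound: if no 2-path and no 2-cycle is monochromatic, the colour of an arc uv lies in the
  set of colours leaving u but not in the set of colours leaving v. In a complete digraph these
  out-colour sets therefore form an antichain of subsets of the k colours, and Sperner's theorem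
  gives n \<le> k choose (k div 2); so n = (2l+1 choose l) + 1 vertices need at least 2l + 2 colours.

  Upper bound: once monochromatic 2-cycles are allowed, 2l + 1 colours suffice. Label the vertices
  by l-subsets of the colours {0..<2l}, each label being carried by one or two vertices (twins);
  this is possible because (2l choose l) \<le> n \<le> 2 (2l choose l). An arc between twins gets colour 2l,
  any other arc uv a colour in L(u) - L(v). Then no 2-path is monochromatic, and the out-colours of
  u other than 2l are exactly L(u), so a colour-preserving automorphism fixes every label. Twins are
  told apart by the arc from the first copy of L to the second copy of its complement, which gets
  colour Max L rather than Min L.
\<close>

lemma sum_fact_card_proper_subsets:
  assumes "finite X" "F \<subseteq> Pow X" "X \<notin> F"
  shows "(\<Sum>A\<in>F. fact (card A) * fact (card X - card A))
       = (\<Sum>x\<in>X. \<Sum>A\<in>{A\<in>F. x \<notin> A}. fact (card A) * fact (card X - 1 - card A) :: nat)"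
proof -
  have "(fact (card A) * fact (card X - card A) :: nat)
      = (\<Sum>x\<in>{x\<in>X. x \<notin> A}. fact (card A) * fact (card X - 1 - card A))"
    if "A \<in> F" for A
  proof -
    have "A \<subset> X" using that assms(2,3) by blast
    then have "card A < card X" using assms(1) psubset_card_mono by blast
    moreover have "card {x\<in>X. x \<notin> A} = card X - card A"
      using \<open>A \<subset> X\<close> assms(1)
      by (metis card_Diff_subset finite_subset psubset_imp_subset set_diff_eq)
    ultimately show ?thesis by (simp add: fact_reduce[of "card X - card A"])
  qed
  then have "(\<Sum>A\<in>F. fact (card A) * fact (card X - card A))
      = (\<Sum>A\<in>F. \<Sum>x\<in>{x\<in>X. x \<notin> A}. fact (card A) * fact (card X - 1 - card A) :: nat)"
    by (rule sum.cong[OF refl])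
  also have "\<dots> = (\<Sum>x\<in>X. \<Sum>A\<in>{A\<in>F. x \<notin> A}. fact (card A) * fact (card X - 1 - card A))"
    using assms(1) finite_subset[OF assms(2)] by (intro sum.swap_restrict[symmetric]) simp_all
  finally show ?thesis .
qed

lemma lym_inequality:
  assumes "finite X" "F \<subseteq> Pow X" "\<forall>A\<in>F. \<forall>B\<in>F. A \<subseteq> B \<longrightarrow> A = B"
  shows "(\<Sum>A\<in>F. fact (card A) * fact (card X - card A)) \<le> (fact (card X) :: nat)"
  using assms
proof (induction "card X" arbitrary: X F)
  case 0
  then have "F \<subseteq> {{}}" by auto
  then show ?case by (cases "F = {}") (auto dest: subset_singletonD)
next
  case (Suc m X F)
  show ?case
  proof (cases "X \<in> F")
    case True
    then have "F = {X}" using Suc.prems by blast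
    then show ?thesis by simp
  next
    case False
    have "(\<Sum>A\<in>F. fact (card A) * fact (card X - card A))
        = (\<Sum>x\<in>X. \<Sum>A\<in>{A\<in>F. x \<notin> A}. fact (card A) * fact (card X - 1 - card A) :: nat)"
      using sum_fact_card_proper_subsets[OF Suc.prems(1,2) False] by simp
    also have "\<dots> = (\<Sum>x\<in>X. \<Sum>A\<in>{A\<in>F. x \<notin> A}. fact (card A) * fact (card (X - {x}) - card A))"
      using Suc.prems(1) Suc.hyps(2)[symmetric] by (intro sum.cong refl) simp
    also have "\<dots> \<le> (\<Sum>x\<in>X. fact (card (X - {x})))"
      using Suc.prems Suc.hyps(2)[symmetric] by (intro sum_mono Suc.hyps(1)) auto
    also have "\<dots> = card X * fact m"
      using Suc.hyps(2)[symmetric] Suc.prems(1) by simp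
    also have "\<dots> = fact (card X)" using Suc.hyps(2)[symmetric] by simp
    finally show ?thesis .
  qed
qed

theorem sperner:
  assumes "finite X" "F \<subseteq> Pow X" "\<forall>A\<in>F. \<forall>B\<in>F. A \<subseteq> B \<longrightarrow> A = B"
  shows "card F \<le> card X choose (card X div 2)"
proof -
  define N where "N = card X"
  define h where "h = N div 2"
  have central: "fact h * fact (N - h) \<le> (fact (card A) * fact (N - card A) :: nat)"
    if "A \<in> F" for A
  proof -
    have "card A \<le> N" using that assms(1,2) N_def by (meson PowD card_mono subsetD)
    then have "fact (card A) * fact (N - card A) * (N choose card A) = (fact N :: nat)"
      by (rule binomial_fact_lemma)
    moreover have "fact h * fact (N - h) * (N choose h) = (fact N :: nat)"
      using binomial_fact_lemma[of h N] h_def by simp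
    moreover have "N choose card A \<le> N choose h" unfolding h_def by (rule binomial_maximum)
    ultimately have "fact h * fact (N - h) * (N choose h)
        \<le> fact (card A) * fact (N - card A) * (N choose h)"
      by (metis mult_le_mono2)
    then show ?thesis by (simp add: h_def)
  qed
  have "card F * (fact h * fact (N - h)) \<le> (\<Sum>A\<in>F. fact (card A) * fact (N - card A))"
    using sum_mono[OF central] by simp
  also have "\<dots> \<le> fact N" unfolding N_def by (rule lym_inequality[OF assms])
  also have "\<dots> = (N choose h) * (fact h * fact (N - h))"
    using binomial_fact_lemma[of h N] h_def by (simp add: mult_ac)
  finally show ?thesis unfolding N_def h_def by simp
qed

locale graph_iso =
  fixes f :: "'a \<Rightarrow> 'b" and V :: "'a set" and E :: "'a \<Rightarrow> 'a \<Rightarrow> bool"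
    and W :: "'b set" and E' :: "'b \<Rightarrow> 'b \<Rightarrow> bool"
  assumes bij: "bij_betw f V W"
    and adj_iff: "\<And>u v. u \<in> V \<Longrightarrow> v \<in> V \<Longrightarrow> E' (f u) (f v) \<longleftrightarrow> E u v"
begin

lemma arc_iff: "u \<in> V \<Longrightarrow> v \<in> V \<Longrightarrow> (f u, f v) \<in> sym_arcs W E' \<longleftrightarrow> (u, v) \<in> sym_arcs V E"
  using bij_betw_apply[OF bij] adj_iff by (auto simp: sym_arcs_def)

lemma arc_in_sym_arcs: "(u, v) \<in> sym_arcs V E \<Longrightarrow> (f u, f v) \<in> sym_arcs W E'"
  using arc_iff by (auto simp: sym_arcs_def)

lemma arc_colouring_pullback:
  "arc_colouring W E' k c \<Longrightarrow> arc_colouring V E k (c \<circ> map_prod f f)"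
  using arc_in_sym_arcs by (auto simp: arc_colouring_def)

lemma no_mono_2path_pullback:
  assumes "no_mono_2path W E' c"
  shows "no_mono_2path V E (c \<circ> map_prod f f)"
  unfolding no_mono_2path_def
proof (intro allI impI)
  fix u v w
  assume arcs: "(u, v) \<in> sym_arcs V E \<and> (v, w) \<in> sym_arcs V E \<and> w \<noteq> u"
  then have "f w \<noteq> f u"
    using bij_betw_imp_inj_on[OF bij] by (auto simp: sym_arcs_def inj_on_eq_iff)
  with arcs assms show "(c \<circ> map_prod f f) (u, v) \<noteq> (c \<circ> map_prod f f) (v, w)"
    using arc_in_sym_arcs unfolding no_mono_2path_def by auto
qed

lemma digraph_aut_conj:
  assumes "digraph_aut V E \<sigma>"
  shows "digraph_aut W E' (f \<circ> \<sigma> \<circ> inv_into V f)"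
proof -
  have \<sigma>: "bij_betw \<sigma> V V" using assms by (simp add: digraph_aut_def)
  have "bij_betw (f \<circ> \<sigma> \<circ> inv_into V f) W W"
    using bij_betw_trans[OF bij_betw_trans[OF bij_betw_inv_into[OF bij] \<sigma>] bij]
    by (simp add: comp_assoc)
  moreover have "(x, y) \<in> sym_arcs W E' \<longleftrightarrow>
      ((f \<circ> \<sigma> \<circ> inv_into V f) x, (f \<circ> \<sigma> \<circ> inv_into V f) y) \<in> sym_arcs W E'"
    if xy: "x \<in> W" "y \<in> W" for x y
  proof -
    obtain u v where uv: "u \<in> V" "v \<in> V" "x = f u" "y = f v"
      using xy bij unfolding bij_betw_def by blast
    have "\<sigma> u \<in> V" "\<sigma> v \<in> V" using uv \<sigma> by (auto dest: bij_betw_apply)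
    then show ?thesis
      using uv assms arc_iff bij_betw_inv_into_left[OF bij]
      by (simp add: digraph_aut_def)
  qed
  ultimately show ?thesis by (simp add: digraph_aut_def)
qed

lemma distinguishing_pullback:
  assumes "distinguishing W E' c"
  shows "distinguishing V E (c \<circ> map_prod f f)"
  unfolding distinguishing_def
proof (intro allI impI)
  fix \<sigma>
  assume "digraph_aut V E \<sigma> \<and>
    (\<forall>(u, v)\<in>sym_arcs V E. (c \<circ> map_prod f f) (\<sigma> u, \<sigma> v) = (c \<circ> map_prod f f) (u, v))"
  then have aut: "digraph_aut V E \<sigma>"
    and pres: "\<And>u v. (u, v) \<in> sym_arcs V E \<Longrightarrow> c (f (\<sigma> u), f (\<sigma> v)) = c (f u, f v)"
    by auto
  define \<tau> where "\<tau> = f \<circ> \<sigma> \<circ> inv_into V f"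
  have \<tau>_f: "\<tau> (f u) = f (\<sigma> u)" if "u \<in> V" for u
    using that bij_betw_inv_into_left[OF bij] by (simp add: \<tau>_def)
  have "\<forall>(x, y)\<in>sym_arcs W E'. c (\<tau> x, \<tau> y) = c (x, y)"
  proof clarify
    fix x y assume "(x, y) \<in> sym_arcs W E'"
    moreover obtain u v where "u \<in> V" "v \<in> V" "x = f u" "y = f v"
      using calculation bij by (auto simp: sym_arcs_def bij_betw_def)
    ultimately show "c (\<tau> x, \<tau> y) = c (x, y)" using pres arc_iff \<tau>_f by auto
  qed
  with digraph_aut_conj[OF aut] assms have \<tau>_id: "\<forall>x\<in>W. \<tau> x = x"
    unfolding distinguishing_def \<tau>_def by blast
  show "\<forall>v\<in>V. \<sigma> v = v"
  proof
    fix v assume "v \<in> V"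
    moreover have "\<sigma> v \<in> V"
      using aut calculation by (auto simp: digraph_aut_def bij_betw_def)
    ultimately show "\<sigma> v = v"
      using \<tau>_id \<tau>_f bij_betw_imp_inj_on[OF bij] bij_betw_apply[OF bij]
      by (metis inj_on_eq_iff)
  qed
qed

end

definition out_colours :: "'a set \<Rightarrow> ('a \<times> 'a \<Rightarrow> nat) \<Rightarrow> 'a \<Rightarrow> nat set" where
  "out_colours V c v = (\<lambda>w. c (v, w)) ` (V - {v})"

lemma out_colours_perm:
  assumes "bij_betw \<sigma> V V" "v \<in> V"
    and "\<And>u w. u \<in> V \<Longrightarrow> w \<in> V \<Longrightarrow> u \<noteq> w \<Longrightarrow> c (\<sigma> u, \<sigma> w) = c (u, w)"
  shows "out_colours V c (\<sigma> v) = out_colours V c v"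
proof -
  have "\<sigma> ` (V - {v}) = \<sigma> ` V - \<sigma> ` {v}"
    using assms(1,2) by (intro inj_on_image_set_diff) (auto simp: bij_betw_def)
  then have "\<sigma> ` (V - {v}) = V - {\<sigma> v}"
    using assms(1) by (simp add: bij_betw_def)
  then have "out_colours V c (\<sigma> v) = (\<lambda>w. c (\<sigma> v, \<sigma> w)) ` (V - {v})"
    unfolding out_colours_def by (metis image_image)
  also have "\<dots> = out_colours V c v"
    unfolding out_colours_def using assms(2,3) by (intro image_cong) auto
  finally show ?thesis .
qed

lemma card_le_choose_if_no_mono_2path_2cycle:
  assumes "arc_colouring V (\<noteq>) k c" "no_mono_2path V (\<noteq>) c" "no_mono_2cycle V (\<noteq>) c"
  shows "card V \<le> k choose (k div 2)"
proof -
  have colours: "out_colours V c v \<subseteq> {..<k}" if "v \<in> V" for v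
    using assms(1) that by (auto simp: out_colours_def arc_colouring_def sym_arcs_def)
  have incomparable: "\<not> out_colours V c u \<subseteq> out_colours V c v"
    if "u \<in> V" "v \<in> V" "u \<noteq> v" for u v
  proof
    assume "out_colours V c u \<subseteq> out_colours V c v"
    moreover have "c (u, v) \<in> out_colours V c u"
      using that by (auto simp: out_colours_def)
    ultimately have "c (u, v) \<in> (\<lambda>w. c (v, w)) ` (V - {v})"
      unfolding out_colours_def by blast
    then obtain w where "w \<in> V - {v}" "c (v, w) = c (u, v)"
      by force
    moreover have "c (u, v) \<noteq> c (v, u)"
      using assms(3) that by (auto simp: no_mono_2cycle_def sym_arcs_def)
    moreover have "c (u, v) \<noteq> c (v, w)" if "w \<noteq> u"
      using assms(2) \<open>u \<in> V\<close> \<open>v \<in> V\<close> \<open>u \<noteq> v\<close> \<open>w \<in> V - {v}\<close> that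
      unfolding no_mono_2path_def sym_arcs_def by blast
    ultimately show False by metis
  qed
  then have "inj_on (out_colours V c) V"
    unfolding inj_on_def by blast
  then have "card V = card (out_colours V c ` V)"
    by (simp add: card_image)
  also have "\<dots> \<le> card {..<k} choose (card {..<k} div 2)"
    using colours incomparable by (intro sperner) auto
  finally show ?thesis by simp
qed

lemma inj_colouring_no_mono_2path: "inj_on c (sym_arcs V E) \<Longrightarrow> no_mono_2path V E c"
  unfolding no_mono_2path_def by (auto dest: inj_onD)

lemma inj_colouring_no_mono_2cycle:
  "inj_on c (sym_arcs V E) \<Longrightarrow> symp E \<Longrightarrow> irreflp E \<Longrightarrow> no_mono_2cycle V E c"
  unfolding no_mono_2cycle_def by (auto dest: inj_onD sympD simp: sym_arcs_def irreflp_def)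

lemma inj_colouring_distinguishing:
  assumes "inj_on c (sym_arcs V E)" "\<And>v. v \<in> V \<Longrightarrow> \<exists>w\<in>V. E v w"
  shows "distinguishing V E c"
  unfolding distinguishing_def
proof (intro allI impI ballI)
  fix \<sigma> v
  assume \<sigma>: "digraph_aut V E \<sigma> \<and> (\<forall>(u, w)\<in>sym_arcs V E. c (\<sigma> u, \<sigma> w) = c (u, w))"
    and "v \<in> V"
  obtain w where "(v, w) \<in> sym_arcs V E"
    using assms(2)[OF \<open>v \<in> V\<close>] \<open>v \<in> V\<close> by (auto simp: sym_arcs_def)
  moreover have "(\<sigma> v, \<sigma> w) \<in> sym_arcs V E"
    using \<sigma> calculation by (auto simp: digraph_aut_def sym_arcs_def)
  ultimately show "\<sigma> v = v"
    using \<sigma> assms(1) by (auto dest: inj_onD)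
qed

lemma chi_D12_attained:
  fixes V :: "nat set"
  assumes "finite V" "\<And>v. v \<in> V \<Longrightarrow> \<exists>w\<in>V. E v w" "symp E" "irreflp E"
  shows "\<exists>c. arc_colouring V E (chi_D12 V E) c \<and> distinguishing V E c
           \<and> no_mono_2path V E c \<and> no_mono_2cycle V E c"
proof -
  have "finite (sym_arcs V E)"
    using assms(1) by (auto simp: sym_arcs_def intro: finite_subset[of _ "V \<times> V"])
  then obtain k where "\<forall>i\<in>prod_encode ` sym_arcs V E. i < k"
    using finite_nat_set_iff_bounded by blast
  then have "arc_colouring V E k prod_encode"
    by (simp add: arc_colouring_def)
  moreover have "inj_on prod_encode (sym_arcs V E)"
    by (rule inj_prod_encode)
  ultimately have "\<exists>k c. arc_colouring V E k c \<and> distinguishing V E c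
                     \<and> no_mono_2path V E c \<and> no_mono_2cycle V E c"
    using assms(2-4) inj_colouring_distinguishing inj_colouring_no_mono_2path
      inj_colouring_no_mono_2cycle by blast
  then show ?thesis
    unfolding chi_D12_def by (rule LeastI_ex)
qed

definition half_sets :: "nat \<Rightarrow> nat set set" where
  "half_sets l = {L. L \<subseteq> {..<2 * l} \<and> card L = l}"

definition twin_vertices :: "nat \<Rightarrow> nat set set \<Rightarrow> (nat set \<times> bool) set" where
  "twin_vertices l T = {(L, b). L \<in> half_sets l \<and> (b \<longrightarrow> L \<in> T)}"

definition twin_colour :: "nat \<Rightarrow> (nat set \<times> bool) \<times> (nat set \<times> bool) \<Rightarrow> nat" where
  "twin_colour l = (\<lambda>((L, a), (M, b)).
     if L = M then 2 * l
     else if M = {..<2 * l} - L \<and> \<not> a \<and> b then Max L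
     else Min (L - M))"

lemma finite_half_sets: "finite (half_sets l)"
  by (rule finite_subset[of _ "Pow {..<2 * l}"]) (auto simp: half_sets_def)

lemma card_half_sets: "card (half_sets l) = (2 * l) choose l"
  unfolding half_sets_def by (simp add: n_subsets)

lemma half_set_finite: "L \<in> half_sets l \<Longrightarrow> finite L"
  by (auto simp: half_sets_def intro: finite_subset)

lemma half_set_compl: "L \<in> half_sets l \<Longrightarrow> {..<2 * l} - L \<in> half_sets l"
  by (auto simp: half_sets_def card_Diff_subset[OF half_set_finite])

lemma half_sets_diff_nonempty:
  assumes "L \<in> half_sets l" "M \<in> half_sets l" "L \<noteq> M"
  shows "L - M \<noteq> {}"
  using assms card_subset_eq[OF half_set_finite[OF assms(2)]] by (auto simp: half_sets_def)

lemma half_set_Min_neq_Max: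
  assumes "L \<in> half_sets l" "2 \<le> l"
  shows "Min L \<noteq> Max L"
proof
  assume "Min L = Max L"
  have "finite L" using assms(1) by (rule half_set_finite)
  have "L \<subseteq> {Min L}"
  proof
    fix x assume "x \<in> L"
    then have "Min L \<le> x" "x \<le> Max L"
      using \<open>finite L\<close> by simp_all
    then show "x \<in> {Min L}"
      using \<open>Min L = Max L\<close> by simp
  qed
  then have "card L \<le> 1"
    using card_mono[of "{Min L}" L] by simp
  with assms show False by (simp add: half_sets_def)
qed

lemma twin_colour_same [simp]: "twin_colour l ((L, a), (L, b)) = 2 * l"
  by (simp add: twin_colour_def)

lemma twin_colour_mem:
  assumes "L \<in> half_sets l" "M \<in> half_sets l" "L \<noteq> M"
  shows "twin_colour l ((L, a), (M, b)) \<in> L - M"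
proof (cases "M = {..<2 * l} - L \<and> \<not> a \<and> b")
  case True
  have "L \<noteq> {}" "finite L"
    using assms half_sets_diff_nonempty half_set_finite by auto
  then show ?thesis
    using True assms(3) Max_in[of L] by (auto simp: twin_colour_def)
next
  case False
  have "L - M \<noteq> {}" "finite (L - M)"
    using assms half_sets_diff_nonempty half_set_finite by auto
  then show ?thesis
    using False assms(3) Min_in[of "L - M"] by (auto simp: twin_colour_def)
qed

lemma twin_colour_compl:
  assumes "L \<in> half_sets l" "0 < l"
  shows "twin_colour l ((L, a), ({..<2 * l} - L, b)) = (if \<not> a \<and> b then Max L else Min L)"
proof -
  have "L \<noteq> {}" using assms by (auto simp: half_sets_def)
  then have "L \<noteq> {..<2 * l} - L" by auto
  moreover have "L - ({..<2 * l} - L) = L" using assms(1) by (auto simp: half_sets_def)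
  ultimately show ?thesis by (simp add: twin_colour_def)
qed

lemma twin_colour_le:
  assumes "x \<in> twin_vertices l T" "y \<in> twin_vertices l T"
  shows "twin_colour l (x, y) \<le> 2 * l"
proof -
  obtain L a M b where "x = (L, a)" "y = (M, b)"
    by (cases x, cases y)
  then show ?thesis
    using assms twin_colour_mem[of L l M a b]
    by (cases "L = M") (auto simp: twin_vertices_def half_sets_def)
qed

lemma twin_colour_eq_iff:
  assumes "L \<in> half_sets l" "M \<in> half_sets l"
  shows "twin_colour l ((L, a), (M, b)) = 2 * l \<longleftrightarrow> L = M"
proof (cases "L = M")
  case False
  then have "twin_colour l ((L, a), (M, b)) \<in> L"
    using twin_colour_mem assms by blast
  then show ?thesis
    using False assms(1) by (auto simp: half_sets_def)
qed simp

lemma twin_colour_arc_colouring: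
  "arc_colouring (twin_vertices l T) (\<noteq>) (2 * l + 1) (twin_colour l)"
  unfolding arc_colouring_def
proof
  fix e assume "e \<in> sym_arcs (twin_vertices l T) (\<noteq>)"
  then obtain x y where "e = (x, y)" "x \<in> twin_vertices l T" "y \<in> twin_vertices l T"
    unfolding sym_arcs_def by blast
  then show "twin_colour l e < 2 * l + 1"
    using twin_colour_le[of x l T y] by simp
qed

lemma twin_colour_no_mono_2path: "no_mono_2path (twin_vertices l T) (\<noteq>) (twin_colour l)"
  unfolding no_mono_2path_def
proof (intro allI impI)
  fix x y z
  assume "(x, y) \<in> sym_arcs (twin_vertices l T) (\<noteq>) \<and> (y, z) \<in> sym_arcs (twin_vertices l T) (\<noteq>)
    \<and> z \<noteq> x"
  moreover obtain L a M b N c where xyz: "x = (L, a)" "y = (M, b)" "z = (N, c)"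
    by (cases x, cases y, cases z)
  ultimately have V:
      "(L, a) \<in> twin_vertices l T" "(M, b) \<in> twin_vertices l T" "(N, c) \<in> twin_vertices l T"
    and distinct: "(L, a) \<noteq> (M, b)" "(M, b) \<noteq> (N, c)" "(N, c) \<noteq> (L, a)"
    by (auto simp: sym_arcs_def)
  have half_sets: "L \<in> half_sets l" "M \<in> half_sets l" "N \<in> half_sets l"
    using V by (auto simp: twin_vertices_def)
  show "twin_colour l (x, y) \<noteq> twin_colour l (y, z)"
  proof (cases "L = M")
    case True
    then have "M \<noteq> N" using distinct by auto
    then show ?thesis using True half_sets twin_colour_eq_iff xyz by metis
  next
    case False
    then have "twin_colour l (x, y) \<in> L - M"
      using twin_colour_mem half_sets xyz by blast
    moreover have "twin_colour l (y, z) \<in> insert (2 * l) M"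
      using twin_colour_mem[of M l N b c] half_sets xyz by (cases "M = N") auto
    ultimately show ?thesis
      using half_sets by (auto simp: half_sets_def)
  qed
qed

lemma out_colours_twin_vertex:
  assumes "(L, a) \<in> twin_vertices l T"
  shows "out_colours (twin_vertices l T) (twin_colour l) (L, a) - {2 * l} = L"
proof
  show "out_colours (twin_vertices l T) (twin_colour l) (L, a) - {2 * l} \<subseteq> L"
  proof
    fix i assume "i \<in> out_colours (twin_vertices l T) (twin_colour l) (L, a) - {2 * l}"
    then obtain y where y: "y \<in> twin_vertices l T" "i = twin_colour l ((L, a), y)" "i \<noteq> 2 * l"
      by (auto simp: out_colours_def)
    obtain M b where "y = (M, b)" by (cases y)
    moreover have "L \<in> half_sets l" "M \<in> half_sets l"
      using assms y(1) calculation by (auto simp: twin_vertices_def)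
    ultimately show "i \<in> L"
      using y twin_colour_eq_iff twin_colour_mem by blast
  qed
next
  show "L \<subseteq> out_colours (twin_vertices l T) (twin_colour l) (L, a) - {2 * l}"
  proof
    fix i assume "i \<in> L"
    have L: "L \<in> half_sets l" using assms by (simp add: twin_vertices_def)
    then have "card ({..<2 * l} - L) = l" "l \<noteq> 0"
      using half_set_compl[OF L] \<open>i \<in> L\<close> by (auto simp: half_sets_def)
    then obtain j where j: "j \<in> {..<2 * l} - L"
      by (metis card.empty ex_in_conv)
    define M where "M = insert j (L - {i})"
    have "M \<in> half_sets l"
      using L j \<open>i \<in> L\<close> half_set_finite[OF L] by (auto simp: M_def half_sets_def)
    moreover have "L \<noteq> M" "L - M = {i}"
      using j \<open>i \<in> L\<close> by (auto simp: M_def)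
    ultimately have "twin_colour l ((L, a), (M, False)) = i" "(M, False) \<in> twin_vertices l T"
      by (auto simp: twin_colour_def twin_vertices_def)
    moreover have "i \<noteq> 2 * l"
      using L \<open>i \<in> L\<close> by (auto simp: half_sets_def)
    ultimately show "i \<in> out_colours (twin_vertices l T) (twin_colour l) (L, a) - {2 * l}"
      using \<open>L \<noteq> M\<close> unfolding out_colours_def by force
  qed
qed

locale twin_perm =
  fixes l :: nat and T :: "nat set set" and \<sigma> :: "nat set \<times> bool \<Rightarrow> nat set \<times> bool"
  assumes bij: "bij_betw \<sigma> (twin_vertices l T) (twin_vertices l T)"
    and colour_pres: "\<And>x y. x \<in> twin_vertices l T \<Longrightarrow> y \<in> twin_vertices l T \<Longrightarrow> x \<noteq> y \<Longrightarrow>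
                        twin_colour l (\<sigma> x, \<sigma> y) = twin_colour l (x, y)"
begin

lemma label_fixed:
  assumes "x \<in> twin_vertices l T"
  shows "fst (\<sigma> x) = fst x"
proof -
  obtain L a where x: "x = (L, a)" by (cases x)
  obtain M b where \<sigma>x: "\<sigma> x = (M, b)" by (cases "\<sigma> x")
  have "(M, b) \<in> twin_vertices l T"
    using bij_betw_apply[OF bij assms] \<sigma>x by simp
  then have "M = out_colours (twin_vertices l T) (twin_colour l) (\<sigma> x) - {2 * l}"
    using out_colours_twin_vertex \<sigma>x by simp
  also have "\<dots> = out_colours (twin_vertices l T) (twin_colour l) x - {2 * l}"
    using out_colours_perm[OF bij assms colour_pres] by simp
  also have "\<dots> = L"
    using out_colours_twin_vertex assms x by simp
  finally show ?thesis using x \<sigma>x by simp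
qed

lemma moved_to_twin:
  assumes "(L, a) \<in> twin_vertices l T" "\<sigma> (L, a) \<noteq> (L, a)"
  shows "\<sigma> (L, a) = (L, \<not> a)"
proof -
  obtain M b where \<sigma>La: "\<sigma> (L, a) = (M, b)" by (cases "\<sigma> (L, a)")
  then have "M = L" using label_fixed[OF assms(1)] by simp
  then show ?thesis using \<sigma>La assms(2) by auto
qed

lemma first_copy_fixed:
  assumes "2 \<le> l" "(L, False) \<in> twin_vertices l T"
  shows "\<sigma> (L, False) = (L, False)"
proof (rule ccontr)
  assume "\<sigma> (L, False) \<noteq> (L, False)"
  then have \<sigma>L: "\<sigma> (L, False) = (L, True)"
    using moved_to_twin[OF assms(2)] by simp
  define L' where "L' = {..<2 * l} - L"
  have L: "L \<in> half_sets l" and L': "L' \<in> half_sets l"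
    using assms(2) half_set_compl by (auto simp: twin_vertices_def L'_def)
  have "L \<noteq> {}" using L assms(1) by (auto simp: half_sets_def)
  then have "L' \<noteq> L" by (auto simp: L'_def)
  have L'_compl: "{..<2 * l} - L' = L"
    using L by (auto simp: L'_def half_sets_def)
  have V': "(L', False) \<in> twin_vertices l T"
    using L' by (simp add: twin_vertices_def)
  have "0 < l" using assms(1) by simp
  show False
  proof (cases "\<sigma> (L', False) = (L', False)")
    case True
    have "Max L' = twin_colour l ((L', False), (L, True))"
      using twin_colour_compl[OF L' \<open>0 < l\<close>, of False True] L'_compl by simp
    also have "\<dots> = twin_colour l (\<sigma> (L', False), \<sigma> (L, False))"
      using True \<sigma>L by simp
    also have "\<dots> = twin_colour l ((L', False), (L, False))"
      using colour_pres[OF V' assms(2)] \<open>L' \<noteq> L\<close> by simp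
    also have "\<dots> = Min L'"
      using twin_colour_compl[OF L' \<open>0 < l\<close>, of False False] L'_compl by simp
    finally show False using half_set_Min_neq_Max[OF L' assms(1)] by simp
  next
    case False
    then have \<sigma>L': "\<sigma> (L', False) = (L', True)"
      using moved_to_twin[OF V'] by simp
    then have V'': "(L', True) \<in> twin_vertices l T"
      using bij_betw_apply[OF bij V'] by simp
    have "\<sigma> (L', True) \<noteq> \<sigma> (L', False)"
      using bij_betw_imp_inj_on[OF bij] V' V'' by (auto dest: inj_onD)
    then have \<sigma>L'': "\<sigma> (L', True) = (L', False)"
      using moved_to_twin[OF V''] \<sigma>L' by auto
    have "Max L = twin_colour l ((L, False), (L', True))"
      using twin_colour_compl[OF L \<open>0 < l\<close>, of False True] by (simp add: L'_def)
    also have "\<dots> = twin_colour l (\<sigma> (L, False), \<sigma> (L', True))"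
      using colour_pres[OF assms(2) V''] \<open>L' \<noteq> L\<close> by simp
    also have "\<dots> = twin_colour l ((L, True), (L', False))"
      using \<sigma>L \<sigma>L'' by simp
    also have "\<dots> = Min L"
      using twin_colour_compl[OF L \<open>0 < l\<close>, of True False] by (simp add: L'_def)
    finally show False using half_set_Min_neq_Max[OF L assms(1)] by simp
  qed
qed

lemma fixes_twin_vertex:
  assumes "2 \<le> l" "x \<in> twin_vertices l T"
  shows "\<sigma> x = x"
proof (cases x)
  case (Pair L a)
  have V: "(L, False) \<in> twin_vertices l T"
    using assms(2) Pair by (simp add: twin_vertices_def)
  then have \<sigma>L: "\<sigma> (L, False) = (L, False)"
    using first_copy_fixed assms(1) by blast
  show ?thesis
  proof (cases a)
    case True
    have "\<sigma> (L, True) \<noteq> \<sigma> (L, False)"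
      using bij_betw_imp_inj_on[OF bij] V assms(2) Pair True by (auto dest: inj_onD)
    then show ?thesis
      using moved_to_twin[of L True] assms(2) Pair True \<sigma>L by auto
  qed (use Pair \<sigma>L in simp)
qed

end

lemma twin_colour_distinguishing:
  assumes "2 \<le> l"
  shows "distinguishing (twin_vertices l T) (\<noteq>) (twin_colour l)"
  unfolding distinguishing_def
proof (intro allI impI)
  fix \<sigma>
  assume \<sigma>: "digraph_aut (twin_vertices l T) (\<noteq>) \<sigma> \<and>
    (\<forall>(x, y)\<in>sym_arcs (twin_vertices l T) (\<noteq>). twin_colour l (\<sigma> x, \<sigma> y) = twin_colour l (x, y))"
  have "bij_betw \<sigma> (twin_vertices l T) (twin_vertices l T)"
    using \<sigma> by (simp add: digraph_aut_def)
  moreover have "twin_colour l (\<sigma> x, \<sigma> y) = twin_colour l (x, y)"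
    if "x \<in> twin_vertices l T" "y \<in> twin_vertices l T" "x \<noteq> y" for x y
    using \<sigma> that unfolding sym_arcs_def by blast
  ultimately interpret twin_perm l T \<sigma>
    by unfold_locales
  show "\<forall>x\<in>twin_vertices l T. \<sigma> x = x"
    using fixes_twin_vertex assms by blast
qed

lemma finite_twin_vertices: "finite (twin_vertices l T)"
  by (rule finite_subset[of _ "half_sets l \<times> UNIV"])
    (auto simp: twin_vertices_def finite_half_sets)

lemma card_twin_vertices:
  assumes "T \<subseteq> half_sets l"
  shows "card (twin_vertices l T) = (2 * l choose l) + card T"
proof -
  have "twin_vertices l T = half_sets l \<times> {False} \<union> T \<times> {True}"
    using assms by (auto simp: twin_vertices_def)
  moreover have "finite T"
    using assms finite_half_sets by (rule finite_subset)
  ultimately show ?thesis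
    unfolding \<open>twin_vertices l T = _\<close>
    by (subst card_Un_disjoint) (auto simp: finite_half_sets card_cartesian_product card_half_sets)
qed

lemma K_E_eq: "K_E = (\<noteq>)"
  by (simp add: fun_eq_iff K_E_def)

lemma chi_D12_complete_lower_bound:
  assumes "2 \<le> n" "k choose (k div 2) < n"
  shows "k < chi_D12 (K_V n) K_E"
proof (rule ccontr)
  assume "\<not> k < chi_D12 (K_V n) K_E"
  have "\<exists>w\<in>K_V n. v \<noteq> w" for v
    using assms(1) by (cases "v = 0") (auto simp: K_V_def intro: bexI[of _ 0] bexI[of _ 1])
  then obtain c where c: "arc_colouring (K_V n) (\<noteq>) (chi_D12 (K_V n) (\<noteq>)) c"
      "no_mono_2path (K_V n) (\<noteq>) c" "no_mono_2cycle (K_V n) (\<noteq>) c"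
    using chi_D12_attained[of "K_V n" "(\<noteq>)"] by (auto simp: K_V_def symp_def irreflp_def)
  then have "arc_colouring (K_V n) (\<noteq>) k c"
    using \<open>\<not> k < chi_D12 (K_V n) K_E\<close> by (auto simp: arc_colouring_def K_E_eq)
  then have "card (K_V n) \<le> k choose (k div 2)"
    using c card_le_choose_if_no_mono_2path_2cycle by blast
  with assms(2) show False by (simp add: K_V_def)
qed

lemma chi_D2_complete_upper_bound:
  assumes "2 \<le> l" "(2 * l) choose l \<le> n" "n \<le> 2 * ((2 * l) choose l)"
  shows "chi_D2 (K_V n) K_E \<le> 2 * l + 1"
proof -
  have "n - ((2 * l) choose l) \<le> card (half_sets l)"
    using assms(3) by (simp add: card_half_sets)
  then obtain T where "T \<subseteq> half_sets l" "card T = n - ((2 * l) choose l)"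
    by (metis obtain_subset_with_card_n)
  then have "card (twin_vertices l T) = n"
    using card_twin_vertices assms(2) by simp
  then obtain f where f: "bij_betw f (K_V n) (twin_vertices l T)"
    using ex_bij_betw_nat_finite[OF finite_twin_vertices] by (metis K_V_def atLeast0LessThan)
  interpret graph_iso f "K_V n" K_E "twin_vertices l T" "(\<noteq>)"
    using f by unfold_locales (auto simp: K_E_def bij_betw_def inj_on_eq_iff)
  have "arc_colouring (K_V n) K_E (2 * l + 1) (twin_colour l \<circ> map_prod f f)
      \<and> distinguishing (K_V n) K_E (twin_colour l \<circ> map_prod f f)
      \<and> no_mono_2path (K_V n) K_E (twin_colour l \<circ> map_prod f f)"
    using arc_colouring_pullback[OF twin_colour_arc_colouring]
      distinguishing_pullback[OF twin_colour_distinguishing[OF assms(1)]]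
      no_mono_2path_pullback[OF twin_colour_no_mono_2path] by blast
  then show ?thesis
    unfolding chi_D2_def by (blast intro: Least_le)
qed

theorem proposition4p5:
  fixes l n :: nat
  assumes "l \<ge> 2"
    and "n = ((2 * l + 1) choose l) + 1"
  shows "chi_D2 (K_V n) K_E < chi_D12 (K_V n) K_E"
proof -
  have "(2 * l + 1) choose l = Suc (2 * l) choose Suc (l - 1)"
    using assms(1) by simp
  also have "\<dots> = ((2 * l) choose (l - 1)) + ((2 * l) choose l)"
    using binomial_Suc_Suc[of "2 * l" "l - 1"] assms(1) by (simp del: binomial_Suc_Suc)
  finally have "n = ((2 * l) choose (l - 1)) + ((2 * l) choose l) + 1"
    using assms(2) by simp
  moreover have "(2 * l) choose (l - 1) < (2 * l) choose l"
    using binomial_strict_mono[of "l - 1" l "2 * l"] assms(1) by simp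
  ultimately have "chi_D2 (K_V n) K_E \<le> 2 * l + 1"
    using chi_D2_complete_upper_bound assms(1) by simp
  moreover have "2 * l + 1 < chi_D12 (K_V n) K_E"
    using chi_D12_complete_lower_bound[of n "2 * l + 1"] assms(2) by (simp add: Suc_le_eq)
  ultimately show ?thesis by simp
qed

end
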